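(* Let $\rho\neq\delta_0$ be a Borel probability measure on $\mathbb{R}_+$ and let $p\ge 2$ be an integer with $m_k(\rho)=\int x^k\rho(dx)<\infty$ for $k=0,\dots,p$. Write $\mathrm{Var}(\rho)=m_2(\rho)-m_1(\rho)^2$. (1) The $S$-transform of $\rho$ admits an expansion \[ S_\rho(z)=\sum_{k=0}^{p-1}s_k(\rho)z^{k}+o(z^{p-1})\qquad\text{as } z\to0,\ z\in\mathfrak{D}_\rho, \] with $s_0(\rho)=\frac1{m_1(\rho)}$ and $s_1(\rho)=\frac1{m_1(\rho)}-\frac{m_2(\rho)}{m_1(\rho)^3}=-\frac{\mathrm{Var}(\rho)}{m_1(\rho)^3}$. (2) The $\Sigma$-transform of $\rho$ admits an expansion \[ \Sigma_\rho(z)=\sum_{k=0}^{p-1}\sigma_k(\rho)z^{k}+o(z^{p-1})\qquad\text{as } z\to0 \text{ with } z/(1-z)\in\mathfrak{D}_\rho, \] with $\sigma_0(\rho)=\frac1{m_1(\rho)}$ and $\sigma_1(\rho)=\frac1{m_1(\rho)}-\frac{m_2(\rho)}{m_1(\rho)^3}=-\frac{\mathrm{Var}(\rho)}{m_1(\rho)^3}$.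
   Context: $i\mathbb{C}^+=\{iz:\operatorname{Im}z>0\}$. For a probability measure $\rho\neq\delta_0$ on $\mathbb{R}_+$: $\Psi_\rho(z)=\int\frac{xz}{1-xz}\rho(dx)$ is univalent on $i\mathbb{C}^+$; $\mathfrak{D}_\rho:=\Psi_\rho(i\mathbb{C}^+)$ and $\Psi_\rho^{-1}:\mathfrak{D}_\rho\to i\mathbb{C}^+$ is its inverse. The $S$-transform is $S_\rho(z)=\frac{(z+1)\Psi_\rho^{-1}(z)}{z}$ for $z\in\mathfrak{D}_\rho$, and the $\Sigma$-transform is $\Sigma_\rho(z)=S_\rho\!\left(\frac{z}{1-z}\right)$ whenever $\frac{z}{1-z}\in\mathfrak{D}_\rho$. *)

theory Defs
  imports "HOL-Probability.Probability" "HOL-Library.Landau_Symbols"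
begin

definition iCplus :: "complex set" where
  "iCplus = {\<i> * z | z. Im z > 0}"

definition Psi :: "real measure \<Rightarrow> complex \<Rightarrow> complex" where
  "Psi \<rho> z = (\<integral>x. complex_of_real x * z / (1 - complex_of_real x * z) \<partial>\<rho>)"

definition Ddom :: "real measure \<Rightarrow> complex set" where
  "Ddom \<rho> = Psi \<rho> ` iCplus"

definition Psi_inv :: "real measure \<Rightarrow> complex \<Rightarrow> complex" where
  "Psi_inv \<rho> = inv_into iCplus (Psi \<rho>)"

definition S_transform :: "real measure \<Rightarrow> complex \<Rightarrow> complex" where
  "S_transform \<rho> z = (z + 1) * Psi_inv \<rho> z / z"

definition Sigma_transform :: "real measure \<Rightarrow> complex \<Rightarrow> complex" where
  "Sigma_transform \<rho> z = S_transform \<rho> (z / (1 - z))"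

definition moment :: "real measure \<Rightarrow> nat \<Rightarrow> real" where
  "moment \<rho> k = (\<integral>x. x ^ k \<partial>\<rho>)"

definition Var :: "real measure \<Rightarrow> real" where
  "Var \<rho> = moment \<rho> 2 - (moment \<rho> 1)^2"

end

theory Submission
  imports Defs "HOL-Computational_Algebra.Polynomial_FPS"
begin

(* Expanding the kernel x w / (1 - x w) into a finite geometric sum gives
   Psi(w) = m_1 w + ... + m_p w^p + o(w^p) as w -> 0 in i C^+, the remainder vanishing by
   dominated convergence. As m_1 > 0, Psi(w) is comparable to w, and a lower bound on -Re Psi(w)
   for |w| >= e shows that Psi^-1(z) -> 0. Composing with the degree-p truncation Q of the formal
   compositional inverse of the moment polynomial then gives Psi^-1(z) = Q(z) + o(z^p), hence
   S(z) = (1 + z) Q(z) / z + o(z^(p-1)); the expansion of Sigma follows by substituting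
   z / (1 - z) = z + ... + z^(p-1) + o(z^(p-1)). The first two coefficients are those of the
   inverse series, 1/m_1 and -m_2/m_1^3. *)

abbreviation cpoly :: "real poly \<Rightarrow> complex poly" where
  "cpoly \<equiv> map_poly complex_of_real"

lemma cpoly_add: "cpoly (p + q) = cpoly p + cpoly q"
  by (rule poly_eqI) (simp add: coeff_map_poly)

lemma cpoly_mult: "cpoly (p * q) = cpoly p * cpoly q"
  by (rule poly_eqI) (simp add: coeff_map_poly coeff_mult)

lemma cpoly_pcompose: "cpoly (pcompose p q) = pcompose (cpoly p) (cpoly q)"
  by (induction p) (simp_all add: pcompose_pCons cpoly_add cpoly_mult map_poly_pCons)

lemma poly_cutoff_plus_shift:
  fixes q :: "'a::comm_semiring_1 poly"
  shows "poly_cutoff n q + monom 1 n * poly_shift n q = q"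
  by (rule poly_eqI) (simp add: coeff_poly_cutoff coeff_monom_mult coeff_poly_shift)

lemma poly_poly_cutoff:
  fixes q :: "'a::comm_semiring_1 poly"
  shows "poly (poly_cutoff n q) z = (\<Sum>k<n. coeff q k * z ^ k)"
proof -
  have "poly_cutoff n q = (\<Sum>k<n. monom (coeff q k) k)"
    by (rule poly_eqI) (simp add: coeff_poly_cutoff coeff_sum)
  then show ?thesis by (simp add: poly_sum poly_monom)
qed

lemma coeff_pcompose_1:
  assumes "coeff q 0 = 0"
  shows "coeff (pcompose p q) 1 = coeff p 1 * coeff q 1"
  using assms by (induction p) (simp_all add: pcompose_pCons coeff_mult poly_0_coeff_0 mult.commute)

lemma eventually_at_withinI:
  "(\<And>z. z \<in> S \<Longrightarrow> z \<noteq> a \<Longrightarrow> P z) \<Longrightarrow> eventually P (at a within S)"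
  by (simp add: eventually_at_filter)

lemma power_smallo_power_at_0:
  fixes S :: "'a::real_normed_field set"
  assumes "m < n"
  shows "(\<lambda>z. z ^ n) \<in> o[at 0 within S](\<lambda>z. z ^ m)"
proof (rule smalloI_tendsto)
  have "((\<lambda>z::'a. z ^ (n - m)) \<longlongrightarrow> 0) (at 0 within S)"
    using assms by (auto intro!: tendsto_eq_intros)
  moreover have "eventually (\<lambda>z. z ^ (n - m) = z ^ n / z ^ m) (at 0 within S)"
    using assms by (intro eventually_at_withinI) (simp add: power_diff)
  ultimately show "((\<lambda>z. z ^ n / z ^ m) \<longlongrightarrow> 0) (at 0 within S)"
    by (rule Lim_transform_eventually)
  show "eventually (\<lambda>z::'a. z ^ m \<noteq> 0) (at 0 within S)"
    by (rule eventually_at_withinI) simp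
qed

lemma bigo_ident_imp_tendsto_0:
  fixes g :: "'a::real_normed_field \<Rightarrow> 'a"
  assumes "g \<in> O[at 0 within S](\<lambda>z. z)"
  shows "(g \<longlongrightarrow> 0) (at 0 within S)"
proof -
  have "(\<lambda>z::'a. z) \<in> o[at 0 within S](\<lambda>_. 1)"
    using power_smallo_power_at_0[of 0 1 S] by simp
  then have "g \<in> o[at 0 within S](\<lambda>_. 1)"
    by (rule landau_o.big_small_trans[OF assms])
  then show ?thesis using smalloD_tendsto by fastforce
qed

lemma poly_minus_truncation_bigo:
  fixes q :: "'a::real_normed_field poly"
  shows "(\<lambda>z. poly q z - (\<Sum>k<n. coeff q k * z ^ k)) \<in> O[at 0 within S](\<lambda>z. z ^ n)"
proof -
  have eq: "poly q z - (\<Sum>k<n. coeff q k * z ^ k) = poly (poly_shift n q) z * z ^ n" for z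
    using arg_cong[OF poly_cutoff_plus_shift, of "\<lambda>r. poly r z" n q]
    by (simp add: poly_poly_cutoff poly_monom algebra_simps)
  have "((\<lambda>z. poly (poly_shift n q) z / 1) \<longlongrightarrow> poly (poly_shift n q) 0) (at 0 within S)"
    by (auto intro!: tendsto_eq_intros)
  then have "(\<lambda>z. poly (poly_shift n q) z) \<in> O[at 0 within S](\<lambda>_. 1)"
    by (rule bigoI_tendsto) simp
  then have "(\<lambda>z. poly (poly_shift n q) z * z ^ n) \<in> O[at 0 within S](\<lambda>z. 1 * z ^ n)"
    by (rule landau_o.big.mult) simp
  then show ?thesis by (simp add: eq)
qed

lemma poly_diff_bigo:
  fixes q :: "complex poly"
  assumes "(a \<longlongrightarrow> 0) F" "(b \<longlongrightarrow> 0) F"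
  shows "(\<lambda>x. poly q (a x) - poly q (b x)) \<in> O[F](\<lambda>x. a x - b x)"
proof -
  have "compact (poly (pderiv q) ` cball 0 1)"
    by (intro compact_continuous_image continuous_on_poly continuous_on_id compact_cball)
  then obtain B where B: "\<And>z. z \<in> cball 0 1 \<Longrightarrow> norm (poly (pderiv q) z) \<le> B"
    by (meson bounded_iff compact_imp_bounded image_eqI)
  have lip: "norm (poly q x - poly q y) \<le> B * norm (x - y)" if "x \<in> cball 0 1" "y \<in> cball 0 1" for x y
    by (rule field_differentiable_bound[of "cball 0 1" "poly q" "poly (pderiv q)"])
       (use that B in \<open>auto intro: has_field_derivative_at_within poly_DERIV\<close>)
  have "eventually (\<lambda>x. norm (a x) < 1) F" "eventually (\<lambda>x. norm (b x) < 1) F"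
    using assms[THEN tendsto_norm_zero] by (auto elim: order_tendstoD)
  then have "eventually (\<lambda>x. norm (poly q (a x) - poly q (b x)) \<le> B * norm (a x - b x)) F"
    by eventually_elim (rule lip, auto)
  then show ?thesis by (intro bigoI) simp
qed

lemma expansion_truncate:
  fixes q :: "real poly"
  assumes "(\<lambda>z. f z - poly (cpoly q) z) \<in> o[at 0 within S](\<lambda>z. z ^ n)"
  shows "(\<lambda>z. f z - (\<Sum>k\<le>n. of_real (coeff q k) * z ^ k)) \<in> o[at 0 within S](\<lambda>z. z ^ n)"
proof -
  have "(\<lambda>z. poly (cpoly q) z - (\<Sum>k\<le>n. of_real (coeff q k) * z ^ k)) \<in> o[at 0 within S](\<lambda>z. z ^ n)"
    using landau_o.big_small_trans[OF poly_minus_truncation_bigo[of "cpoly q" "Suc n"]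
        power_smallo_power_at_0[of n "Suc n"]]
    by (simp add: coeff_map_poly lessThan_Suc_atMost)
  from sum_in_smallo(1)[OF assms this] show ?thesis by simp
qed

lemma expansion_compose:
  fixes A B :: "real poly" and g :: "complex \<Rightarrow> complex"
  assumes f: "(\<lambda>u. f u - poly (cpoly A) u) \<in> o[F](\<lambda>u. u ^ n)"
    and g_F: "filterlim g F (at 0 within S)"
    and g_O: "g \<in> O[at 0 within S](\<lambda>z. z)"
    and g: "(\<lambda>z. g z - poly (cpoly B) z) \<in> o[at 0 within S](\<lambda>z. z ^ n)"
    and B0: "coeff B 0 = 0"
  shows "(\<lambda>z. f (g z) - poly (cpoly (pcompose A B)) z) \<in> o[at 0 within S](\<lambda>z. z ^ n)"
proof -
  have "(\<lambda>z. f (g z) - poly (cpoly A) (g z)) \<in> o[at 0 within S](\<lambda>z. g z ^ n)"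
    using landau_o.small.compose[OF f g_F] by simp
  also have "(\<lambda>z. g z ^ n) \<in> O[at 0 within S](\<lambda>z. z ^ n)"
    by (rule landau_o.big_power[OF g_O])
  finally have outer: "(\<lambda>z. f (g z) - poly (cpoly A) (g z)) \<in> o[at 0 within S](\<lambda>z. z ^ n)" .
  have "((\<lambda>z. poly (cpoly B) z) \<longlongrightarrow> poly (cpoly B) 0) (at 0 within S)"
    by (auto intro!: tendsto_eq_intros)
  then have B_0: "(poly (cpoly B) \<longlongrightarrow> 0) (at 0 within S)"
    by (simp add: poly_0_coeff_0 coeff_map_poly B0)
  have "(\<lambda>z. poly (cpoly A) (g z) - poly (cpoly A) (poly (cpoly B) z))
      \<in> O[at 0 within S](\<lambda>z. g z - poly (cpoly B) z)"
    by (rule poly_diff_bigo[OF bigo_ident_imp_tendsto_0[OF g_O] B_0])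
  also note g
  finally have inner: "(\<lambda>z. poly (cpoly A) (g z) - poly (cpoly A) (poly (cpoly B) z))
      \<in> o[at 0 within S](\<lambda>z. z ^ n)" .
  from sum_in_smallo(1)[OF outer inner] show ?thesis
    by (simp add: cpoly_pcompose poly_pcompose)
qed

lemma iCplus_iff: "w \<in> iCplus \<longleftrightarrow> Re w < 0"
proof
  assume "w \<in> iCplus"
  then show "Re w < 0" by (auto simp: iCplus_def)
next
  assume "Re w < 0"
  then have "w = \<i> * (- \<i> * w)" "Im (- \<i> * w) > 0" by auto
  then show "w \<in> iCplus" unfolding iCplus_def by blast
qed

lemma norm_le_norm_one_minus:
  fixes u :: complex
  assumes "Re u \<le> 0"
  shows "norm u \<le> norm (1 - u)"
proof -
  have "(Re u)\<^sup>2 + (Im u)\<^sup>2 \<le> (Re (1 - u))\<^sup>2 + (Im (1 - u))\<^sup>2"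
    using assms by (simp add: power2_eq_square algebra_simps)
  then show ?thesis unfolding cmod_def by (rule real_sqrt_le_mono)
qed

lemma norm_divide_one_minus_le_1:
  fixes u :: complex
  assumes "Re u \<le> 0"
  shows "norm (u / (1 - u)) \<le> 1"
proof -
  have "u \<noteq> 1" using assms by auto
  then show ?thesis
    using norm_le_norm_one_minus[OF assms] by (simp add: norm_divide divide_le_eq_1)
qed

lemma divide_one_minus_minus_sum_power:
  fixes u :: complex
  assumes "u \<noteq> 1"
  shows "u / (1 - u) - (\<Sum>k=1..n. u ^ k) = u ^ n * (u / (1 - u))"
proof (induction n)
  case (Suc n)
  then show ?case using assms by (simp add: field_simps)
qed simp

lemma minus_Re_divide_one_minus_ge:
  fixes u :: complex
  assumes "Re u \<le> 0"
  shows "(norm u / (1 + norm u))\<^sup>2 \<le> - Re (u / (1 - u))"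
proof -
  have "u \<noteq> 1" using assms by auto
  then have d: "norm (1 - u) > 0" by simp
  have "Re (u / (1 - u)) = (Re u - (norm u)\<^sup>2) / (norm (1 - u))\<^sup>2"
    unfolding Re_divide cmod_power2 by (simp add: power2_eq_square algebra_simps)
  then have "- Re (u / (1 - u)) = ((norm u)\<^sup>2 - Re u) / (norm (1 - u))\<^sup>2"
    by (simp add: minus_divide_left)
  also have "\<dots> \<ge> (norm u)\<^sup>2 / (norm (1 - u))\<^sup>2"
    using assms by (intro divide_right_mono) auto
  also have "(norm u)\<^sup>2 / (norm (1 - u))\<^sup>2 \<ge> (norm u)\<^sup>2 / (1 + norm u)\<^sup>2"
    using d norm_triangle_ineq4[of 1 u]
    by (intro divide_left_mono power_mono mult_pos_pos) auto
  finally show ?thesis by (simp add: power_divide)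
qed

definition geometric_poly :: "nat \<Rightarrow> real poly" where
  "geometric_poly n = (\<Sum>k=1..n. monom 1 k)"

lemma coeff_geometric_poly: "coeff (geometric_poly n) k = (if 1 \<le> k \<and> k \<le> n then 1 else 0)"
  by (simp add: geometric_poly_def coeff_sum)

lemma poly_geometric_poly: "poly (cpoly (geometric_poly n)) z = (\<Sum>k=1..n. z ^ k)"
proof -
  have "cpoly (geometric_poly n) = (\<Sum>k=1..n. monom 1 k)"
    by (rule poly_eqI) (simp add: coeff_map_poly coeff_geometric_poly coeff_sum)
  then show ?thesis by (simp add: poly_sum poly_monom)
qed

lemma divide_one_minus_bigo:
  "(\<lambda>z::complex. z / (1 - z)) \<in> O[at 0 within S](\<lambda>z. z)"
proof (rule bigoI_tendsto)
  have "((\<lambda>z::complex. 1 / (1 - z)) \<longlongrightarrow> 1) (at 0 within S)"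
    by (auto intro!: tendsto_eq_intros)
  moreover have "eventually (\<lambda>z. 1 / (1 - z) = z / (1 - z) / z) (at 0 within S)"
    by (rule eventually_at_withinI) simp
  ultimately show "((\<lambda>z. z / (1 - z) / z) \<longlongrightarrow> 1) (at 0 within S)"
    by (rule Lim_transform_eventually)
  show "eventually (\<lambda>z::complex. z \<noteq> 0) (at 0 within S)"
    by (rule eventually_at_withinI) simp
qed

lemma divide_one_minus_expansion:
  "(\<lambda>z. z / (1 - z) - poly (cpoly (geometric_poly n)) z) \<in> o[at 0 within S](\<lambda>z. z ^ n)"
proof (rule smalloI_tendsto)
  have "eventually (\<lambda>z::complex. norm z < 1) (at 0 within S)"
    using tendsto_norm_zero[OF tendsto_ident_at] by (rule order_tendstoD) simp
  moreover have "eventually (\<lambda>z::complex. z \<noteq> 0) (at 0 within S)"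
    by (rule eventually_at_withinI) simp
  ultimately
  have "eventually (\<lambda>z. z / (1 - z) = (z / (1 - z) - poly (cpoly (geometric_poly n)) z) / z ^ n)
      (at 0 within S)"
  proof eventually_elim
    case (elim z)
    then have "z \<noteq> 1" by auto
    from divide_one_minus_minus_sum_power[OF this, of n] elim show ?case
      by (simp add: poly_geometric_poly)
  qed
  moreover have "((\<lambda>z::complex. z / (1 - z)) \<longlongrightarrow> 0) (at 0 within S)"
    by (auto intro!: tendsto_eq_intros)
  ultimately show "((\<lambda>z. (z / (1 - z) - poly (cpoly (geometric_poly n)) z) / z ^ n) \<longlongrightarrow> 0)
      (at 0 within S)"
    by (simp add: Lim_transform_eventually)
  show "eventually (\<lambda>z::complex. z ^ n \<noteq> 0) (at 0 within S)"
    by (rule eventually_at_withinI) simp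
qed

lemma filterlim_divide_one_minus:
  fixes D :: "complex set"
  shows "filterlim (\<lambda>z. z / (1 - z)) (at 0 within D) (at 0 within {z. z \<noteq> 1 \<and> z / (1 - z) \<in> D})"
proof (rule filterlim_at_withinI)
  show "filterlim (\<lambda>z::complex. z / (1 - z)) (nhds 0) (at 0 within {z. z \<noteq> 1 \<and> z / (1 - z) \<in> D})"
    by (auto intro!: tendsto_eq_intros)
  show "eventually (\<lambda>z. z / (1 - z) \<in> D - {0}) (at 0 within {z. z \<noteq> 1 \<and> z / (1 - z) \<in> D})"
    by (rule eventually_at_withinI) auto
qed

lemma prob_space_eq_return_if_AE_eq:
  fixes M :: "real measure"
  assumes M: "prob_space M" "sets M = sets borel" and c: "AE x in M. x = c"
  shows "M = return borel c"
proof (rule measure_eqI)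
  show "sets M = sets (return borel c)" using M(2) by simp
next
  fix A assume A: "A \<in> sets M"
  show "emeasure M A = emeasure (return borel c) A"
  proof (cases "c \<in> A")
    case True
    have "AE x in M. x \<in> A" using c by eventually_elim (use True in auto)
    then show ?thesis using prob_space.emeasure_eq_1_AE[OF M(1)] A M(2) True by simp
  next
    case False
    have "AE x in M. x \<notin> A" using c by eventually_elim (use False in auto)
    then have "emeasure M {x \<in> space M. x \<in> A} = 0" by (rule emeasure_eq_0_AE)
    then show ?thesis using A M(2) False sets_eq_imp_space_eq[OF M(2)] by simp
  qed
qed

definition psi_kernel :: "complex \<Rightarrow> real \<Rightarrow> complex" where
  "psi_kernel w x = complex_of_real x * w / (1 - complex_of_real x * w)"

lemma psi_kernel_measurable [measurable]: "psi_kernel w \<in> borel_measurable borel"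
  unfolding psi_kernel_def by measurable

lemma Re_of_real_mult_nonpos: "Re w < 0 \<Longrightarrow> x \<ge> 0 \<Longrightarrow> Re (complex_of_real x * w) \<le> 0"
  by (simp add: mult_nonneg_nonpos)

lemma norm_psi_kernel_le_1: "Re w < 0 \<Longrightarrow> x \<ge> 0 \<Longrightarrow> norm (psi_kernel w x) \<le> 1"
  unfolding psi_kernel_def by (intro norm_divide_one_minus_le_1 Re_of_real_mult_nonpos)

lemma divide_one_plus_mono:
  fixes s t :: real
  assumes "0 \<le> s" "s \<le> t"
  shows "s / (1 + s) \<le> t / (1 + t)"
  using assms by (simp add: field_simps)

locale nonneg_moments =
  fixes \<rho> :: "real measure" and p :: nat
  assumes prob: "prob_space \<rho>"
    and sets_rho: "sets \<rho> = sets borel"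
    and nonneg: "AE x in \<rho>. x \<ge> 0"
    and not_dirac: "\<rho> \<noteq> return borel 0"
    and p_ge_2: "p \<ge> 2"
    and integrable_power: "\<And>k. k \<le> p \<Longrightarrow> integrable \<rho> (\<lambda>x. x ^ k)"
begin

lemma borel_measurable_rho [simp]: "borel_measurable \<rho> = borel_measurable borel"
  by (rule measurable_cong_sets[OF sets_rho refl])

lemma not_AE_eq_0: "\<not> (AE x in \<rho>. x = 0)"
  using prob_space_eq_return_if_AE_eq[OF prob sets_rho] not_dirac by blast

lemma moment_1_pos: "moment \<rho> 1 > 0"
proof -
  have int1: "integrable \<rho> (\<lambda>x. x)" using integrable_power[of 1] p_ge_2 by simp
  have "moment \<rho> 1 \<ge> 0" unfolding moment_def
    by (rule integral_nonneg_AE) (use nonneg in simp)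
  moreover have "moment \<rho> 1 \<noteq> 0"
    using integral_nonneg_eq_0_iff_AE[OF int1 nonneg] not_AE_eq_0 by (simp add: moment_def)
  ultimately show ?thesis by simp
qed

lemma integrable_psi_kernel:
  assumes "Re w < 0"
  shows "integrable \<rho> (psi_kernel w)"
proof -
  interpret finite_measure \<rho> using prob by (simp add: prob_space_def)
  show ?thesis
  proof (rule integrable_const_bound[where B=1])
    show "AE x in \<rho>. norm (psi_kernel w x) \<le> 1" using nonneg
      by eventually_elim (rule norm_psi_kernel_le_1[OF assms])
  qed simp
qed

lemma Psi_eq_integral: "Psi \<rho> w = integral\<^sup>L \<rho> (psi_kernel w)"
  unfolding Psi_def psi_kernel_def by simp

definition moment_poly :: "real poly" where
  "moment_poly = (\<Sum>k\<in>{1..p}. monom (moment \<rho> k) k)"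

lemma coeff_moment_poly: "coeff moment_poly k = (if 1 \<le> k \<and> k \<le> p then moment \<rho> k else 0)"
  by (simp add: moment_poly_def coeff_sum)

lemma poly_moment_poly:
  "poly (cpoly moment_poly) w = (\<Sum>k=1..p. complex_of_real (moment \<rho> k) * w ^ k)"
proof -
  have "cpoly moment_poly = (\<Sum>k\<in>{1..p}. monom (complex_of_real (moment \<rho> k)) k)"
    by (rule poly_eqI) (simp add: coeff_map_poly coeff_moment_poly coeff_sum)
  then show ?thesis by (simp add: poly_sum poly_monom)
qed

definition Psi_remainder :: "complex \<Rightarrow> complex" where
  "Psi_remainder w = (\<integral>x. complex_of_real (x ^ p) * psi_kernel w x \<partial>\<rho>)"

lemma Psi_minus_moment_poly:
  assumes w: "Re w < 0"
  shows "Psi \<rho> w - poly (cpoly moment_poly) w = w ^ p * Psi_remainder w"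
proof -
  have int: "integrable \<rho> (\<lambda>x. complex_of_real (x ^ k) * w ^ k)" if "k \<le> p" for k
    using integrable_power[OF that] by (intro integrable_mult_left integrable_of_real)
  have "poly (cpoly moment_poly) w = (\<Sum>k=1..p. \<integral>x. complex_of_real (x ^ k) * w ^ k \<partial>\<rho>)"
    unfolding poly_moment_poly moment_def
    by (simp only: integral_mult_left_zero integral_complex_of_real)
  also have "\<dots> = (\<integral>x. (\<Sum>k=1..p. complex_of_real (x ^ k) * w ^ k) \<partial>\<rho>)"
    using int by (intro Bochner_Integration.integral_sum[symmetric]) simp
  finally have moments: "poly (cpoly moment_poly) w
      = (\<integral>x. (\<Sum>k=1..p. complex_of_real (x ^ k) * w ^ k) \<partial>\<rho>)" .
  have "Psi \<rho> w - poly (cpoly moment_poly) w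
      = (\<integral>x. psi_kernel w x - (\<Sum>k=1..p. complex_of_real (x ^ k) * w ^ k) \<partial>\<rho>)"
    unfolding moments Psi_eq_integral
    by (intro Bochner_Integration.integral_diff[symmetric] integrable_psi_kernel[OF w]
        Bochner_Integration.integrable_sum int) simp
  also have "\<dots> = (\<integral>x. w ^ p * (complex_of_real (x ^ p) * psi_kernel w x) \<partial>\<rho>)"
  proof (rule integral_cong_AE)
    show "AE x in \<rho>. psi_kernel w x - (\<Sum>k=1..p. complex_of_real (x ^ k) * w ^ k)
        = w ^ p * (complex_of_real (x ^ p) * psi_kernel w x)"
      using nonneg
    proof eventually_elim
      case (elim x)
      have "complex_of_real x * w \<noteq> 1"
        using Re_of_real_mult_nonpos[OF w elim] by (metis one_complex.simps(1) not_one_le_zero)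
      from divide_one_minus_minus_sum_power[OF this, of p] show ?case
        by (simp add: psi_kernel_def power_mult_distrib mult_ac)
    qed
  qed simp_all
  also have "\<dots> = w ^ p * Psi_remainder w" by (simp add: Psi_remainder_def)
  finally show ?thesis .
qed

lemma Psi_remainder_tendsto_0: "(Psi_remainder \<longlongrightarrow> 0) (at 0 within iCplus)"
  unfolding tendsto_at_iff_sequentially comp_def
proof (intro allI impI)
  fix W :: "nat \<Rightarrow> complex"
  assume W: "\<forall>i. W i \<in> iCplus - {0}" and lim: "W \<longlonglongrightarrow> 0"
  have "(\<lambda>i. \<integral>x. complex_of_real (x ^ p) * psi_kernel (W i) x \<partial>\<rho>) \<longlonglongrightarrow> (\<integral>x. 0 \<partial>\<rho>)"
  proof (rule integral_dominated_convergence[where w="\<lambda>x. \<bar>x ^ p\<bar>"])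
    show "integrable \<rho> (\<lambda>x. \<bar>x ^ p\<bar>)" using integrable_power[of p] by auto
    show "AE x in \<rho>. (\<lambda>i. complex_of_real (x ^ p) * psi_kernel (W i) x) \<longlonglongrightarrow> 0"
      unfolding psi_kernel_def by (auto intro!: tendsto_eq_intros lim)
    show "AE x in \<rho>. norm (complex_of_real (x ^ p) * psi_kernel (W i) x) \<le> \<bar>x ^ p\<bar>" for i
      using nonneg
    proof eventually_elim
      case (elim x)
      have "Re (W i) < 0" using W iCplus_iff by blast
      from norm_psi_kernel_le_1[OF this elim] show ?case
        by (simp add: norm_mult norm_power power_abs mult_left_le)
    qed
  qed simp_all
  then show "(\<lambda>i. Psi_remainder (W i)) \<longlonglongrightarrow> 0" by (simp add: Psi_remainder_def)
qed

lemma Psi_expansion: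
  "(\<lambda>w. Psi \<rho> w - poly (cpoly moment_poly) w) \<in> o[at 0 within iCplus](\<lambda>w. w ^ p)"
proof (rule smalloI_tendsto)
  have "eventually (\<lambda>w. Psi_remainder w = (Psi \<rho> w - poly (cpoly moment_poly) w) / w ^ p)
      (at 0 within iCplus)"
    by (rule eventually_at_withinI) (simp add: Psi_minus_moment_poly iCplus_iff)
  with Psi_remainder_tendsto_0
  show "((\<lambda>w. (Psi \<rho> w - poly (cpoly moment_poly) w) / w ^ p) \<longlongrightarrow> 0) (at 0 within iCplus)"
    by (rule Lim_transform_eventually)
  show "eventually (\<lambda>w. w ^ p \<noteq> 0) (at 0 within iCplus)"
    by (rule eventually_at_withinI) simp
qed

lemma Psi_bigtheta: "Psi \<rho> \<in> \<Theta>[at 0 within iCplus](\<lambda>w. w)"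
proof -
  have "(\<lambda>w. w ^ p) \<in> O[at 0 within iCplus](\<lambda>w. w ^ 1)"
    using p_ge_2 by (intro landau_o.small_imp_big power_smallo_power_at_0) simp
  with Psi_expansion
  have "(\<lambda>w. Psi \<rho> w - poly (cpoly moment_poly) w) \<in> o[at 0 within iCplus](\<lambda>w. w ^ 1)"
    by (rule landau_o.small_big_trans)
  then have "(\<lambda>w. Psi \<rho> w - (\<Sum>k\<le>1. of_real (coeff moment_poly k) * w ^ k))
      \<in> o[at 0 within iCplus](\<lambda>w. w ^ 1)"
    by (rule expansion_truncate)
  then have "(\<lambda>w. Psi \<rho> w - of_real (moment \<rho> 1) * w)
      \<in> o[at 0 within iCplus](\<lambda>w. of_real (moment \<rho> 1) * w)"
    using moment_1_pos p_ge_2 by (simp add: coeff_moment_poly)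
  then have "Psi \<rho> \<in> \<Theta>[at 0 within iCplus](\<lambda>w. of_real (moment \<rho> 1) * w)"
    by (intro asymp_equiv_imp_bigtheta smallo_imp_asymp_equiv)
  then show ?thesis using moment_1_pos by simp
qed

definition Psi_lower_const :: "real \<Rightarrow> real" where
  "Psi_lower_const e = (\<integral>x. (x * e / (1 + x * e))\<^sup>2 \<partial>\<rho>)"

lemma integrable_Psi_lower_const:
  assumes "e > 0"
  shows "integrable \<rho> (\<lambda>x. (x * e / (1 + x * e))\<^sup>2)"
proof -
  interpret finite_measure \<rho> using prob by (simp add: prob_space_def)
  show ?thesis
  proof (rule integrable_const_bound[where B=1])
    show "AE x in \<rho>. norm ((x * e / (1 + x * e))\<^sup>2) \<le> 1"
      using nonneg
    proof eventually_elim
      case (elim x)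
      have "0 \<le> x * e" using elim assms by simp
      then have "0 \<le> x * e / (1 + x * e)" "x * e / (1 + x * e) \<le> 1"
        by (simp_all add: divide_le_eq_1)
      then show ?case by (simp add: power_le_one)
    qed
  qed simp
qed

lemma Psi_lower_const_pos:
  assumes "e > 0"
  shows "Psi_lower_const e > 0"
proof -
  have nn: "AE x in \<rho>. 0 \<le> (x * e / (1 + x * e))\<^sup>2" by simp
  have "Psi_lower_const e \<ge> 0" unfolding Psi_lower_const_def by (rule integral_nonneg_AE[OF nn])
  moreover have "Psi_lower_const e \<noteq> 0"
  proof
    assume "Psi_lower_const e = 0"
    then have "AE x in \<rho>. (x * e / (1 + x * e))\<^sup>2 = 0"
      using integral_nonneg_eq_0_iff_AE[OF integrable_Psi_lower_const[OF assms] nn]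
      by (simp add: Psi_lower_const_def)
    then have "AE x in \<rho>. x = 0"
      using nonneg
    proof eventually_elim
      case (elim x)
      have "1 + x * e > 0" using elim assms by (intro add_pos_nonneg) auto
      then show "x = 0" using elim assms by simp
    qed
    with not_AE_eq_0 show False by blast
  qed
  ultimately show ?thesis by simp
qed

lemma Psi_lower_const_le_norm_Psi:
  assumes w: "Re w < 0" and e: "e > 0" "e \<le> norm w"
  shows "Psi_lower_const e \<le> norm (Psi \<rho> w)"
proof -
  have "Psi_lower_const e \<le> (\<integral>x. - Re (psi_kernel w x) \<partial>\<rho>)"
    unfolding Psi_lower_const_def
  proof (rule integral_mono_AE)
    show "integrable \<rho> (\<lambda>x. - Re (psi_kernel w x))"
      by (intro integrable_minus integrable_bounded_linear[OF bounded_linear_Re]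
          integrable_psi_kernel[OF w])
    show "AE x in \<rho>. (x * e / (1 + x * e))\<^sup>2 \<le> - Re (psi_kernel w x)"
      using nonneg
    proof eventually_elim
      case (elim x)
      have "x * e / (1 + x * e) \<le> norm (complex_of_real x * w) / (1 + norm (complex_of_real x * w))"
        using elim e by (intro divide_one_plus_mono) (auto simp: norm_mult mult_left_mono)
      then have "(x * e / (1 + x * e))\<^sup>2
          \<le> (norm (complex_of_real x * w) / (1 + norm (complex_of_real x * w)))\<^sup>2"
        using elim e by (intro power_mono) auto
      also have "\<dots> \<le> - Re (psi_kernel w x)"
        unfolding psi_kernel_def
        by (intro minus_Re_divide_one_minus_ge Re_of_real_mult_nonpos w elim)
      finally show ?case .
    qed
  qed (rule integrable_Psi_lower_const[OF e(1)])
  also have "\<dots> = - Re (Psi \<rho> w)"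
    unfolding Psi_eq_integral
    by (simp add: integral_bounded_linear[OF bounded_linear_Re integrable_psi_kernel[OF w]])
  also have "\<dots> \<le> norm (Psi \<rho> w)"
    by (metis abs_Re_le_cmod abs_le_D2)
  finally show ?thesis .
qed

lemma Psi_inv_in_iCplus: "z \<in> Ddom \<rho> \<Longrightarrow> Psi_inv \<rho> z \<in> iCplus"
  unfolding Psi_inv_def Ddom_def by (rule inv_into_into)

lemma Psi_Psi_inv: "z \<in> Ddom \<rho> \<Longrightarrow> Psi \<rho> (Psi_inv \<rho> z) = z"
  unfolding Psi_inv_def Ddom_def by (rule f_inv_into_f)

lemma filterlim_Psi_inv: "filterlim (Psi_inv \<rho>) (at 0 within iCplus) (at 0 within Ddom \<rho>)"
proof (rule filterlim_at_withinI)
  show "eventually (\<lambda>z. Psi_inv \<rho> z \<in> iCplus - {0}) (at 0 within Ddom \<rho>)"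
    by (rule eventually_at_withinI) (auto dest: Psi_inv_in_iCplus simp: iCplus_iff)
  show "filterlim (Psi_inv \<rho>) (nhds 0) (at 0 within Ddom \<rho>)"
  proof (rule tendstoI)
    fix e :: real assume e: "e > 0"
    have "eventually (\<lambda>z. norm z < Psi_lower_const e) (at 0 within Ddom \<rho>)"
      using tendsto_norm_zero[OF tendsto_ident_at] Psi_lower_const_pos[OF e]
      by (rule order_tendstoD)
    moreover have "eventually (\<lambda>z. z \<in> Ddom \<rho>) (at 0 within Ddom \<rho>)"
      by (rule eventually_at_withinI) simp
    ultimately show "eventually (\<lambda>z. dist (Psi_inv \<rho> z) 0 < e) (at 0 within Ddom \<rho>)"
    proof eventually_elim
      case (elim z)
      show ?case
      proof (rule ccontr)
        assume "\<not> ?case"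
        then have "Psi_lower_const e \<le> norm (Psi \<rho> (Psi_inv \<rho> z))"
          using Psi_inv_in_iCplus[OF elim(2)] e by (intro Psi_lower_const_le_norm_Psi) (auto simp: iCplus_iff)
        then show False using Psi_Psi_inv[OF elim(2)] elim(1) by simp
      qed
    qed
  qed
qed

abbreviation moment_fps :: "real fps" where
  "moment_fps \<equiv> fps_of_poly moment_poly"

text \<open>\<open>pCons 0 inv_quot\<close> is the truncation at degree \<open>p\<close> of the compositional inverse of
  \<open>moment_poly\<close>; it is kept in this factored form because the \<open>S\<close>-transform divides by \<open>z\<close>.\<close>
definition inv_quot :: "real poly" where
  "inv_quot = truncate_fps p (fps_shift 1 (fps_inv moment_fps))"

lemma coeff_inv_quot: "coeff inv_quot k = (if k < p then fps_nth (fps_inv moment_fps) (Suc k) else 0)"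
  by (simp add: inv_quot_def coeff_truncate_fps)

lemma fps_inv_moment_1: "fps_nth (fps_inv moment_fps) 1 = 1 / moment \<rho> 1"
  using p_ge_2 by (simp add: fps_inv_def coeff_moment_poly)

lemma fps_inv_moment_2: "fps_nth (fps_inv moment_fps) 2 = - moment \<rho> 2 / moment \<rho> 1 ^ 3"
proof -
  have "fps_nth (fps_inv moment_fps) 2
      = - (fps_nth (fps_inv moment_fps) 1 * fps_nth (moment_fps ^ 1) 2) / (fps_nth moment_fps 1)\<^sup>2"
    by (simp add: fps_inv_def numeral_2_eq_2)
  also have "\<dots> = - (1 / moment \<rho> 1) * moment \<rho> 2 / (moment \<rho> 1)\<^sup>2"
    using p_ge_2 by (simp add: fps_inv_moment_1[unfolded One_nat_def] coeff_moment_poly)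
  also have "\<dots> = - moment \<rho> 2 / moment \<rho> 1 ^ 3"
    using moment_1_pos by (simp add: field_simps power2_eq_square power3_eq_cube)
  finally show ?thesis .
qed

lemma coeff_pcompose_inv_moment_poly:
  assumes "k \<le> p"
  shows "coeff (pcompose (pCons 0 inv_quot) moment_poly) k = (if k = 1 then 1 else 0)"
proof -
  have "coeff (pcompose (pCons 0 inv_quot) moment_poly) k
      = fps_nth (fps_of_poly (pCons 0 inv_quot) oo moment_fps) k"
    by (subst fps_of_poly_pcompose[symmetric]) (simp_all add: coeff_moment_poly)
  also have "\<dots> = (\<Sum>i=0..k. coeff (pCons 0 inv_quot) i * fps_nth (moment_fps ^ i) k)"
    by (simp add: fps_compose_nth)
  also have "\<dots> = (\<Sum>i=0..k. fps_nth (fps_inv moment_fps) i * fps_nth (moment_fps ^ i) k)"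
    using assms by (intro sum.cong) (auto simp: coeff_pCons coeff_inv_quot fps_inv_def split: nat.split)
  also have "\<dots> = fps_nth (fps_inv moment_fps oo moment_fps) k"
    by (simp add: fps_compose_nth)
  also have "\<dots> = fps_nth fps_X k"
    using moment_1_pos p_ge_2 by (subst fps_inv) (simp_all add: coeff_moment_poly)
  finally show ?thesis by simp
qed

lemma Psi_inv_expansion:
  "(\<lambda>z. Psi_inv \<rho> z - poly (cpoly (pCons 0 inv_quot)) z) \<in> o[at 0 within Ddom \<rho>](\<lambda>z. z ^ p)"
proof -
  let ?G = "at 0 within iCplus" and ?Q = "pCons 0 inv_quot"
  have Psi_O: "Psi \<rho> \<in> O[?G](\<lambda>w. w)"
    using Psi_bigtheta by blast
  have "(\<lambda>w. poly (cpoly ?Q) (Psi \<rho> w) - poly (cpoly (pcompose ?Q moment_poly)) w) \<in> o[?G](\<lambda>w. w ^ p)"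
    using Psi_O Psi_expansion
    by (intro expansion_compose[where F = "nhds 0"] bigo_ident_imp_tendsto_0)
       (simp_all add: coeff_moment_poly)
  then have "(\<lambda>w. poly (cpoly ?Q) (Psi \<rho> w) - (\<Sum>k\<le>p. of_real (coeff (pcompose ?Q moment_poly) k) * w ^ k))
      \<in> o[?G](\<lambda>w. w ^ p)"
    by (rule expansion_truncate)
  moreover have "(\<Sum>k\<le>p. of_real (coeff (pcompose ?Q moment_poly) k) * w ^ k) = w" for w :: complex
    using p_ge_2 by (simp add: coeff_pcompose_inv_moment_poly if_distrib if_distribR sum.delta cong: if_cong)
  ultimately have "(\<lambda>w. poly (cpoly ?Q) (Psi \<rho> w) - w) \<in> o[?G](\<lambda>w. w ^ p)"
    by simp
  also have "(\<lambda>w. w ^ p) \<in> O[?G](\<lambda>w. Psi \<rho> w ^ p)"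
    using Psi_bigtheta by (intro landau_o.big_power) (auto simp: bigtheta_sym)
  finally have "(\<lambda>w. poly (cpoly ?Q) (Psi \<rho> w) - w) \<in> o[?G](\<lambda>w. Psi \<rho> w ^ p)" .
  from landau_o.small.compose[OF this filterlim_Psi_inv]
  have composed: "(\<lambda>z. poly (cpoly ?Q) (Psi \<rho> (Psi_inv \<rho> z)) - Psi_inv \<rho> z)
      \<in> o[at 0 within Ddom \<rho>](\<lambda>z. Psi \<rho> (Psi_inv \<rho> z) ^ p)" .
  have ev: "eventually (\<lambda>z. Psi \<rho> (Psi_inv \<rho> z) = z) (at 0 within Ddom \<rho>)"
    by (rule eventually_at_withinI) (rule Psi_Psi_inv)
  then have "o[at 0 within Ddom \<rho>](\<lambda>z. Psi \<rho> (Psi_inv \<rho> z) ^ p) = o[at 0 within Ddom \<rho>](\<lambda>z. z ^ p)"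
    by (intro landau_o.small.cong) (use ev in eventually_elim, simp)
  moreover from ev have "eventually (\<lambda>z. poly (cpoly ?Q) (Psi \<rho> (Psi_inv \<rho> z)) - Psi_inv \<rho> z
      = poly (cpoly ?Q) z - Psi_inv \<rho> z) (at 0 within Ddom \<rho>)"
    by eventually_elim simp
  ultimately have "(\<lambda>z. poly (cpoly ?Q) z - Psi_inv \<rho> z) \<in> o[at 0 within Ddom \<rho>](\<lambda>z. z ^ p)"
    using composed landau_o.small.in_cong by fastforce
  then show ?thesis
    using landau_o.small.uminus_in_iff by fastforce
qed

definition S_poly :: "real poly" where
  "S_poly = [:1, 1:] * inv_quot"

lemma coeff_S_poly_0: "coeff S_poly 0 = 1 / moment \<rho> 1"
  using p_ge_2 by (simp add: S_poly_def coeff_inv_quot fps_inv_moment_1[unfolded One_nat_def])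

lemma coeff_S_poly_1: "coeff S_poly 1 = 1 / moment \<rho> 1 - moment \<rho> 2 / moment \<rho> 1 ^ 3"
  using p_ge_2 fps_inv_moment_1 fps_inv_moment_2
  by (simp add: S_poly_def coeff_inv_quot numeral_2_eq_2)

lemma S_expansion:
  "(\<lambda>z. S_transform \<rho> z - poly (cpoly S_poly) z) \<in> o[at 0 within Ddom \<rho>](\<lambda>z. z ^ (p - 1))"
proof (rule smalloI_tendsto)
  let ?F = "at 0 within Ddom \<rho>" and ?D = "\<lambda>z. Psi_inv \<rho> z - poly (cpoly (pCons 0 inv_quot)) z"
  have "((\<lambda>z. (z + 1) * (?D z / z ^ p)) \<longlongrightarrow> (0 + 1) * 0) ?F"
    by (intro tendsto_intros smalloD_tendsto[OF Psi_inv_expansion])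
  moreover have "eventually (\<lambda>z. (z + 1) * (?D z / z ^ p)
      = (S_transform \<rho> z - poly (cpoly S_poly) z) / z ^ (p - 1)) ?F"
  proof (rule eventually_at_withinI)
    fix z :: complex assume "z \<noteq> 0"
    moreover have "z ^ p = z * z ^ (p - 1)" using p_ge_2 by (simp flip: power_Suc)
    ultimately show "(z + 1) * (?D z / z ^ p) = (S_transform \<rho> z - poly (cpoly S_poly) z) / z ^ (p - 1)"
      by (simp add: S_transform_def S_poly_def cpoly_mult cpoly_add map_poly_pCons field_simps)
  qed
  ultimately show "((\<lambda>z. (S_transform \<rho> z - poly (cpoly S_poly) z) / z ^ (p - 1)) \<longlongrightarrow> 0) ?F"
    by (simp add: Lim_transform_eventually)
  show "eventually (\<lambda>z. z ^ (p - 1) \<noteq> 0) ?F"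
    by (rule eventually_at_withinI) simp
qed

definition Sigma_poly :: "real poly" where
  "Sigma_poly = pcompose S_poly (geometric_poly (p - 1))"

lemma Sigma_expansion:
  "(\<lambda>z. Sigma_transform \<rho> z - poly (cpoly Sigma_poly) z)
     \<in> o[at 0 within {z. z \<noteq> 1 \<and> z / (1 - z) \<in> Ddom \<rho>}](\<lambda>z. z ^ (p - 1))"
  unfolding Sigma_transform_def Sigma_poly_def
  by (rule expansion_compose[OF S_expansion filterlim_divide_one_minus divide_one_minus_bigo
        divide_one_minus_expansion]) (simp add: coeff_geometric_poly)

lemma coeff_Sigma_poly_0: "coeff Sigma_poly 0 = coeff S_poly 0"
  by (simp add: Sigma_poly_def coeff_geometric_poly poly_0_coeff_0)

lemma coeff_Sigma_poly_1: "coeff Sigma_poly 1 = coeff S_poly 1"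
  using p_ge_2 unfolding Sigma_poly_def by (subst coeff_pcompose_1) (simp_all add: coeff_geometric_poly)

end

theorem theorem8:
  fixes \<rho> :: "real measure" and p :: nat
  assumes "prob_space \<rho>"
    and "sets \<rho> = sets borel"
    and "AE x in \<rho>. x \<ge> 0"
    and "\<rho> \<noteq> return borel 0"
    and "p \<ge> 2"
    and "\<And>k. k \<le> p \<Longrightarrow> integrable \<rho> (\<lambda>x. x ^ k)"
  shows "(\<exists>s :: nat \<Rightarrow> real.
            s 0 = 1 / moment \<rho> 1
          \<and> s 1 = 1 / moment \<rho> 1 - moment \<rho> 2 / moment \<rho> 1 ^ 3
          \<and> s 1 = - Var \<rho> / moment \<rho> 1 ^ 3
          \<and> (\<lambda>z. S_transform \<rho> z - (\<Sum>k<p. complex_of_real (s k) * z ^ k))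
              \<in> o[at 0 within Ddom \<rho>](\<lambda>z. z ^ (p - 1)))
       \<and> (\<exists>\<sigma> :: nat \<Rightarrow> real.
            \<sigma> 0 = 1 / moment \<rho> 1
          \<and> \<sigma> 1 = 1 / moment \<rho> 1 - moment \<rho> 2 / moment \<rho> 1 ^ 3
          \<and> \<sigma> 1 = - Var \<rho> / moment \<rho> 1 ^ 3
          \<and> (\<lambda>z. Sigma_transform \<rho> z - (\<Sum>k<p. complex_of_real (\<sigma> k) * z ^ k))
              \<in> o[at 0 within {z. z \<noteq> 1 \<and> z / (1 - z) \<in> Ddom \<rho>}](\<lambda>z. z ^ (p - 1)))"
proof -
  interpret nonneg_moments \<rho> p
    by (rule nonneg_moments.intro) (fact assms)+
  have var: "1 / moment \<rho> 1 - moment \<rho> 2 / moment \<rho> 1 ^ 3 = - Var \<rho> / moment \<rho> 1 ^ 3"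
    using moment_1_pos by (simp add: Var_def field_simps power2_eq_square power3_eq_cube)
  have sum_range: "{..p - 1} = {..<p}"
    using p_ge_2 by auto
  show ?thesis
  proof (intro conjI exI)
    show "(\<lambda>z. S_transform \<rho> z - (\<Sum>k<p. of_real (coeff S_poly k) * z ^ k))
        \<in> o[at 0 within Ddom \<rho>](\<lambda>z. z ^ (p - 1))"
      using expansion_truncate[OF S_expansion] by (simp only: sum_range)
    show "(\<lambda>z. Sigma_transform \<rho> z - (\<Sum>k<p. of_real (coeff Sigma_poly k) * z ^ k))
        \<in> o[at 0 within {z. z \<noteq> 1 \<and> z / (1 - z) \<in> Ddom \<rho>}](\<lambda>z. z ^ (p - 1))"
      using expansion_truncate[OF Sigma_expansion] by (simp only: sum_range)
  qed (simp_all only: coeff_Sigma_poly_0 coeff_Sigma_poly_1 coeff_S_poly_0 coeff_S_poly_1 var)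
qed

end
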